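(* Consider the multi-flow status-update queueing system described in the context with a single server ($M=1$), packet service times exponentially distributed and i.i.d. across time, and packet generation and arrival times synchronized across the $N$ flows. Let $P_1$ be a policy following the preemptive MAF-LGFS discipline and $\pi_1$ a work-conserving causal policy, both operating on the same packet generation/arrival times. Suppose that on a sample path a packet is delivered in $P_1$ and a packet is delivered in $\pi_1$ at the same time $t$. Let $\bm\Delta_{P_1}$ and $\bm\Delta'_{P_1}$ be the age vectors of $P_1$ just before and just after this delivery, and $\bm\Delta_{\pi_1}$, $\bm\Delta'_{\pi_1}$ those of $\pi_1$. If $\Delta_{[i],P_1}\le\Delta_{[i],\pi_1}$ for all $i=1,\ldots,N$, then $\Delta'_{[i],P_1}\le\Delta'_{[i],\pi_1}$ for all $i=1,\ldots,N$.
   Context: System: $N$ flows of update packets are sent through a queue with an infinite buffer and $M$ servers; each server processes one packet at a time. The $i$-th packet of flow $n$ is generated at time $S_{n,i}$, arrives at the queue at time $A_{n,i}$, and is delivered to its destination at time $D_{n,i}$, with $S_{n,i}\le A_{n,i}\le D_{n,i}$ and generation times non-decreasing in $i$. Generation and arrival times are synchronized across flows if there are sequences $\{S_i\}$, $\{A_i\}$ with $S_{n,i}=S_i$, $A_{n,i}=A_i$ for all $n,i$. A policy is work-conserving if the server is busy whenever the queue is non-empty; it is causal if decisions depend only on history and current state. Age of flow $n$: $\Delta_n(t)=t-\max\{S_{n,i}:D_{n,i}\le t\}$; the age vector is $\bm\Delta=(\Delta_1,\ldots,\Delta_N)$, and $\Delta_{[i]}$ denotes its $i$-th largest component. The preemptive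 MAF-LGFS policy serves, among all packets of all flows, the last generated packet from the flow with the maximum age (ties broken arbitrarily), preempting the packet in service when this target changes (preempted packets return to the queue). *)

theory Defs
  imports Complex_Main
begin

text \<open>Sg n i is the generation time, Ag n i the arrival time of packet i of flow n.
A policy's sample path is given by its delivery times D n i (None = never delivered).\<close>

definition synchronized :: "(nat \<Rightarrow> nat \<Rightarrow> real) \<Rightarrow> (nat \<Rightarrow> nat \<Rightarrow> real) \<Rightarrow> bool" where
  "synchronized Sg Ag \<longleftrightarrow> (\<exists>S A. \<forall>n i. Sg n i = S i \<and> Ag n i = A i)"

definition delivered_le :: "(nat \<Rightarrow> nat \<Rightarrow> real option) \<Rightarrow> nat \<Rightarrow> nat \<Rightarrow> real \<Rightarrow> bool" where
  "delivered_le D n i t \<longleftrightarrow> (\<exists>d. D n i = Some d \<and> d \<le> t)"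

definition delivered_lt :: "(nat \<Rightarrow> nat \<Rightarrow> real option) \<Rightarrow> nat \<Rightarrow> nat \<Rightarrow> real \<Rightarrow> bool" where
  "delivered_lt D n i t \<longleftrightarrow> (\<exists>d. D n i = Some d \<and> d < t)"

definition age :: "(nat \<Rightarrow> nat \<Rightarrow> real) \<Rightarrow> (nat \<Rightarrow> nat \<Rightarrow> real option) \<Rightarrow> nat \<Rightarrow> real \<Rightarrow> real" where
  "age Sg D n t = t - Max {Sg n i | i. delivered_le D n i t}"

definition age_before :: "(nat \<Rightarrow> nat \<Rightarrow> real) \<Rightarrow> (nat \<Rightarrow> nat \<Rightarrow> real option) \<Rightarrow> nat \<Rightarrow> real \<Rightarrow> real" where
  "age_before Sg D n t = t - Max {Sg n i | i. delivered_lt D n i t}"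

definition kth_largest :: "nat \<Rightarrow> (nat \<Rightarrow> real) \<Rightarrow> nat \<Rightarrow> real" where
  "kth_largest N v k = rev (sort (map v [0..<N])) ! (k - 1)"

text \<open>Admissible single-server sample path: a delivered packet has arrived and its
(exponential, hence positive) service takes positive time; at most one packet is delivered
at any time (single server).\<close>
definition valid_path :: "nat \<Rightarrow> (nat \<Rightarrow> nat \<Rightarrow> real) \<Rightarrow> (nat \<Rightarrow> nat \<Rightarrow> real option) \<Rightarrow> bool" where
  "valid_path N Ag D \<longleftrightarrow>
     (\<forall>n<N. \<forall>i d. D n i = Some d \<longrightarrow> Ag n i < d) \<and>
     (\<forall>n<N. \<forall>m<N. \<forall>i j d. D n i = Some d \<and> D m j = Some d \<longrightarrow> n = m \<and> i = j)"

definition in_queue_before :: "(nat \<Rightarrow> nat \<Rightarrow> real) \<Rightarrow> (nat \<Rightarrow> nat \<Rightarrow> real option) \<Rightarrow> nat \<Rightarrow> nat \<Rightarrow> real \<Rightarrow> bool" where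
  "in_queue_before Ag D n i t \<longleftrightarrow> Ag n i < t \<and> \<not> delivered_lt D n i t"

text \<open>Preemptive MAF-LGFS: whenever a packet is delivered at time t, it is the packet that
was the service target just before t, i.e. it was in the queue, it belongs to a flow of
maximum age (among flows with packets in the queue), and it is the last generated
packet of that flow in the queue.\<close>
definition maf_lgfs_path :: "nat \<Rightarrow> (nat \<Rightarrow> nat \<Rightarrow> real) \<Rightarrow> (nat \<Rightarrow> nat \<Rightarrow> real) \<Rightarrow> (nat \<Rightarrow> nat \<Rightarrow> real option) \<Rightarrow> bool" where
  "maf_lgfs_path N Sg Ag D \<longleftrightarrow>
     (\<forall>t n i. n < N \<and> D n i = Some t \<longrightarrow>
        in_queue_before Ag D n i t \<and>
        (\<forall>m j. m < N \<and> in_queue_before Ag D m j t \<longrightarrow> age_before Sg D m t \<le> age_before Sg D n t) \<and>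
        (\<forall>j. in_queue_before Ag D n j t \<longrightarrow> Sg n j \<le> Sg n i))"

end

theory Submission
  imports Defs "HOL-Library.Multiset"
begin

text \<open>With synchronized arrivals, every flow has received by time t at most the freshest packet
  that has arrived before t, whose generation time we call L; so all ages just before and just
  after t are at least t - L. MAF-LGFS delivers the newest queued packet of the flow of maximum
  age, which lowers that maximum to exactly t - L, while any policy changes at most one age and
  cannot push it below t - L. Comparing vectors through the counts
  #{n. x \<le> v n}, which characterise the comparison of sorted components, the step
  "lower the maximum of the smaller vector to the global floor, change one entry of the larger
  one" preserves the comparison.\<close>

definition count_ge :: "nat \<Rightarrow> (nat \<Rightarrow> real) \<Rightarrow> real \<Rightarrow> nat" where
  "count_ge N v x = card {n. n < N \<and> x \<le> v n}"

lemma count_ge_le: "count_ge N v x \<le> N"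
proof -
  have "{n. n < N \<and> x \<le> v n} \<subseteq> {..<N}" by auto
  then show ?thesis unfolding count_ge_def by (metis card_lessThan card_mono finite_lessThan)
qed

lemma count_ge_sort: "count_ge N v x = card {j. j < N \<and> x \<le> sort (map v [0..<N]) ! j}"
proof -
  have "length (filter (\<lambda>y. x \<le> y) (sort (map v [0..<N])))
        = length (filter (\<lambda>y. x \<le> y) (map v [0..<N]))"
    by (metis mset_filter mset_sort size_mset)
  moreover have "{n. n < N \<and> x \<le> v n} = {j. j < N \<and> x \<le> map v [0..<N] ! j}"
    by auto
  ultimately show ?thesis unfolding count_ge_def
    by (simp add: length_filter_conv_card)
qed

lemma sorted_nth_ge_iff_card:
  assumes "sorted ys" "i < length ys"
  shows "x \<le> ys ! i \<longleftrightarrow> length ys - i \<le> card {j. j < length ys \<and> x \<le> ys ! j}"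
proof
  assume "x \<le> ys ! i"
  then have "{i..<length ys} \<subseteq> {j. j < length ys \<and> x \<le> ys ! j}"
    using assms by (auto intro: order_trans[OF _ sorted_nth_mono[of ys i]])
  from card_mono[OF _ this] show "length ys - i \<le> card {j. j < length ys \<and> x \<le> ys ! j}"
    by simp
next
  assume card_ge: "length ys - i \<le> card {j. j < length ys \<and> x \<le> ys ! j}"
  show "x \<le> ys ! i"
  proof (rule ccontr)
    assume "\<not> x \<le> ys ! i"
    then have "{j. j < length ys \<and> x \<le> ys ! j} \<subseteq> {Suc i..<length ys}"
      using assms by (auto simp: not_less_eq_eq dest: sorted_nth_mono[of ys _ i])
    from card_mono[OF _ this] have "card {j. j < length ys \<and> x \<le> ys ! j} \<le> length ys - Suc i"
      by simp
    then show False using card_ge assms by linarith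
  qed
qed

lemma kth_largest_ge_iff:
  assumes "1 \<le> k" "k \<le> N"
  shows "x \<le> kth_largest N v k \<longleftrightarrow> k \<le> count_ge N v x"
proof -
  let ?ys = "sort (map v [0..<N])"
  have "kth_largest N v k = ?ys ! (N - k)"
    unfolding kth_largest_def using assms by (simp add: rev_nth)
  moreover have "x \<le> ?ys ! (N - k) \<longleftrightarrow> N - (N - k) \<le> card {j. j < N \<and> x \<le> ?ys ! j}"
    using sorted_nth_ge_iff_card[of ?ys "N - k" x] assms by simp
  ultimately show ?thesis using assms count_ge_sort[of N v x] by simp
qed

lemma kth_largest_le_iff_count_ge:
  "(\<forall>k\<in>{1..N}. kth_largest N u k \<le> kth_largest N w k) \<longleftrightarrow> (\<forall>x. count_ge N u x \<le> count_ge N w x)"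
proof
  assume kth_le: "\<forall>k\<in>{1..N}. kth_largest N u k \<le> kth_largest N w k"
  show "\<forall>x. count_ge N u x \<le> count_ge N w x"
  proof
    fix x
    let ?k = "count_ge N u x"
    show "?k \<le> count_ge N w x"
    proof (cases "?k = 0")
      case False
      then have k: "1 \<le> ?k" "?k \<le> N" using count_ge_le[of N u x] by auto
      have "x \<le> kth_largest N u ?k" using kth_largest_ge_iff[OF k] by simp
      also have "\<dots> \<le> kth_largest N w ?k" using kth_le k by auto
      finally show ?thesis using kth_largest_ge_iff[OF k, of x w] by simp
    qed simp
  qed
next
  assume count_le: "\<forall>x. count_ge N u x \<le> count_ge N w x"
  show "\<forall>k\<in>{1..N}. kth_largest N u k \<le> kth_largest N w k"
  proof
    fix k assume "k \<in> {1..N}"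
    then have k: "1 \<le> k" "k \<le> N" by auto
    let ?x = "kth_largest N u k"
    have "k \<le> count_ge N u ?x" using kth_largest_ge_iff[OF k, of ?x u] by simp
    also have "\<dots> \<le> count_ge N w ?x" using count_le by simp
    finally show "?x \<le> kth_largest N w k" using kth_largest_ge_iff[OF k] by simp
  qed
qed

lemma count_ge_le_after_lowering_max:
  assumes count_le: "\<forall>x. count_ge N a x \<le> count_ge N b x"
    and p: "p < N" and a_max: "\<forall>n<N. a n \<le> a p"
    and a'_p: "a' p = c" and a'_other: "\<forall>n<N. n \<noteq> p \<longrightarrow> a' n = a n"
    and a_floor: "\<forall>n<N. c \<le> a n"
    and b'_other: "\<forall>n<N. n \<noteq> q \<longrightarrow> b' n = b n"
    and b'_floor: "\<forall>n<N. c \<le> b' n"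
  shows "count_ge N a' x \<le> count_ge N b' x"
proof (cases "x \<le> c")
  case True
  then have "{n. n < N \<and> x \<le> b' n} = {..<N}" using b'_floor by force
  then show ?thesis using count_ge_le[of N a' x] unfolding count_ge_def by simp
next
  case False
  let ?A = "{n. n < N \<and> x \<le> a n}" and ?B = "{n. n < N \<and> x \<le> b n}"
  let ?A' = "{n. n < N \<and> x \<le> a' n}" and ?B' = "{n. n < N \<and> x \<le> b' n}"
  have "?A' \<subseteq> ?A - {p}" using False a'_p a'_other by auto
  then have "card ?A' \<le> card (?A - {p})" by (simp add: card_mono)
  also have "\<dots> \<le> card ?A - 1"
  proof (cases "p \<in> ?A")
    case False
    then have "?A = {}" using a_max p by (auto intro: order_trans)
    then show ?thesis by (simp only: card.empty) simp
  qed simp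
  also have "\<dots> \<le> card ?B - 1" using count_le unfolding count_ge_def by (meson diff_le_mono)
  also have "\<dots> \<le> card (?B - {q})" by (simp add: card_Diff_singleton_if)
  also have "\<dots> \<le> card ?B'" using b'_other by (intro card_mono) auto
  finally show ?thesis unfolding count_ge_def .
qed

lemma age_eq_age_before_other_flow:
  assumes "valid_path N Ag D" "n < N" "m < N" "D m j = Some t" "n \<noteq> m"
  shows "age Sg D n t = age_before Sg D n t"
proof -
  have "delivered_le D n i t \<longleftrightarrow> delivered_lt D n i t" for i
    using assms unfolding valid_path_def delivered_le_def delivered_lt_def
    by (metis order_le_less)
  then show ?thesis unfolding age_def age_before_def by simp
qed

lemma delivered_lt_imp_le: "delivered_lt D n i t \<Longrightarrow> delivered_le D n i t"
  unfolding delivered_lt_def delivered_le_def by auto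

context
  fixes S A :: "nat \<Rightarrow> real" and t :: real
  assumes finite_arrived: "finite {k. A k < t}"
begin

definition freshest_arrived :: real where
  "freshest_arrived = Max (S ` {k. A k < t})"

lemma le_freshest_arrived: "A k < t \<Longrightarrow> S k \<le> freshest_arrived"
  unfolding freshest_arrived_def using finite_arrived by simp

lemma freshest_arrived_attained:
  assumes "A j < t"
  obtains k where "A k < t" "S k = freshest_arrived"
proof -
  have "freshest_arrived \<in> S ` {k. A k < t}"
    unfolding freshest_arrived_def using finite_arrived assms by (intro Max_in) auto
  then show ?thesis using that by (metis (mono_tags) imageE mem_Collect_eq)
qed

lemma delivered_gen_times_subset:
  assumes "valid_path N (\<lambda>n. A) D" "n < N"
  shows "{S i | i. delivered_le D n i t} \<subseteq> S ` {k. A k < t}"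
  using assms unfolding valid_path_def delivered_le_def by fastforce

lemma finite_delivered_gen_times:
  assumes "valid_path N (\<lambda>n. A) D" "n < N"
  shows "finite {S i | i. delivered_le D n i t}" "finite {S i | i. delivered_lt D n i t}"
  using finite_subset[OF delivered_gen_times_subset[OF assms]] finite_arrived
  by (auto intro: finite_subset[of _ "{S i | i. delivered_le D n i t}"] delivered_lt_imp_le)

lemma age_ge_freshest_arrived:
  assumes "valid_path N (\<lambda>n. A) D" "n < N" "\<exists>i. delivered_lt D n i t"
  shows "t - freshest_arrived \<le> age (\<lambda>n. S) D n t"
proof -
  have "Max {S i | i. delivered_le D n i t} \<le> freshest_arrived"
    using assms(3) finite_delivered_gen_times[OF assms(1,2)] le_freshest_arrived
      delivered_gen_times_subset[OF assms(1,2)]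
    by (subst Max_le_iff) (auto dest: delivered_lt_imp_le)
  then show ?thesis unfolding age_def by simp
qed

lemma age_before_ge_freshest_arrived:
  assumes "valid_path N (\<lambda>n. A) D" "n < N" "\<exists>i. delivered_lt D n i t"
  shows "t - freshest_arrived \<le> age_before (\<lambda>n. S) D n t"
proof -
  have "{S i | i. delivered_lt D n i t} \<subseteq> {S i | i. delivered_le D n i t}"
    by (auto dest: delivered_lt_imp_le)
  then have "Max {S i | i. delivered_lt D n i t} \<le> Max {S i | i. delivered_le D n i t}"
    using assms(3) finite_delivered_gen_times[OF assms(1,2)] by (intro Max_mono) auto
  then have "age (\<lambda>n. S) D n t \<le> age_before (\<lambda>n. S) D n t"
    unfolding age_def age_before_def by simp
  then show ?thesis using age_ge_freshest_arrived[OF assms] by linarith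
qed

context
  fixes N :: nat and D :: "nat \<Rightarrow> nat \<Rightarrow> real option" and n0 i0 :: nat
  assumes valid: "valid_path N (\<lambda>n. A) D"
    and maf_lgfs: "maf_lgfs_path N (\<lambda>n. S) (\<lambda>n. A) D"
    and n0: "n0 < N" "D n0 i0 = Some t"
    and initial: "\<forall>n<N. \<exists>i. delivered_lt D n i t"
begin

lemma maf_lgfs_delivery:
  "in_queue_before (\<lambda>n. A) D n0 i0 t"
  "\<And>m j. m < N \<Longrightarrow> in_queue_before (\<lambda>n. A) D m j t
     \<Longrightarrow> age_before (\<lambda>n. S) D m t \<le> age_before (\<lambda>n. S) D n0 t"
  "\<And>j. in_queue_before (\<lambda>n. A) D n0 j t \<Longrightarrow> S j \<le> S i0"
  using maf_lgfs n0 unfolding maf_lgfs_path_def by blast+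

lemma maf_lgfs_freshest_attained:
  obtains k where "A k < t" "S k = freshest_arrived"
  using maf_lgfs_delivery(1) freshest_arrived_attained unfolding in_queue_before_def by blast

text \<open>A flow with nothing queued has already received the freshest arrived packet, so its age
  is the floor t - L, which the delivering flow's age is not below.\<close>
lemma maf_lgfs_delivers_max_age:
  assumes "n < N"
  shows "age_before (\<lambda>n. S) D n t \<le> age_before (\<lambda>n. S) D n0 t"
proof (cases "\<exists>j. in_queue_before (\<lambda>n. A) D n j t")
  case True
  then show ?thesis using maf_lgfs_delivery(2) assms by blast
next
  case False
  obtain k where k: "A k < t" "S k = freshest_arrived" by (rule maf_lgfs_freshest_attained)
  with False have "freshest_arrived \<in> {S i | i. delivered_lt D n i t}"
    unfolding in_queue_before_def by (auto intro!: exI[of _ k])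
  then have "age_before (\<lambda>n. S) D n t \<le> t - freshest_arrived"
    using finite_delivered_gen_times[OF valid assms] unfolding age_before_def by simp
  also have "\<dots> \<le> age_before (\<lambda>n. S) D n0 t"
    using age_before_ge_freshest_arrived[OF valid] n0 initial by blast
  finally show ?thesis .
qed

text \<open>Either the freshest arrived packet was already delivered to flow n0, or it is queued and
  the delivered packet, being the last generated one of the flow, is at least as fresh.\<close>
lemma maf_lgfs_age_after_delivery: "age (\<lambda>n. S) D n0 t = t - freshest_arrived"
proof -
  let ?G = "{S i | i. delivered_le D n0 i t}"
  obtain k where k: "A k < t" "S k = freshest_arrived" by (rule maf_lgfs_freshest_attained)
  have fin: "finite ?G" using finite_delivered_gen_times[OF valid n0(1)] by simp
  have "freshest_arrived \<le> Max ?G"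
  proof (cases "delivered_lt D n0 k t")
    case True
    then have "freshest_arrived \<in> ?G" using k by (auto dest: delivered_lt_imp_le intro!: exI[of _ k])
    then show ?thesis using fin by simp
  next
    case False
    then have "freshest_arrived \<le> S i0"
      using k maf_lgfs_delivery(3) unfolding in_queue_before_def by metis
    also have "S i0 \<le> Max ?G"
      using fin n0 by (intro Max_ge) (auto simp: delivered_le_def)
    finally show ?thesis .
  qed
  then show ?thesis
    using age_ge_freshest_arrived[OF valid] n0 initial unfolding age_def by fastforce
qed

end

end

theorem lemma2:
  fixes N :: nat and Sg Ag :: "nat \<Rightarrow> nat \<Rightarrow> real"
    and DP Dpi :: "nat \<Rightarrow> nat \<Rightarrow> real option" and t :: real
  assumes "N \<ge> 1"
    and sync: "synchronized Sg Ag"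
    and gen_mono: "\<forall>n i j. i \<le> j \<longrightarrow> Sg n i \<le> Sg n j"
    and S_le_A: "\<forall>n i. Sg n i \<le> Ag n i"
    and fin_arr: "\<forall>n (s::real). finite {i. Ag n i \<le> s}"
    and validP: "valid_path N Ag DP"
    and validpi: "valid_path N Ag Dpi"
    and P1: "maf_lgfs_path N Sg Ag DP"
    and delP: "\<exists>n<N. \<exists>i. DP n i = Some t"
    and delpi: "\<exists>n<N. \<exists>i. Dpi n i = Some t"
    and initP: "\<forall>n<N. \<exists>i. delivered_lt DP n i t"
    and initpi: "\<forall>n<N. \<exists>i. delivered_lt Dpi n i t"
    and before: "\<forall>k\<in>{1..N}. kth_largest N (\<lambda>n. age_before Sg DP n t) k
                              \<le> kth_largest N (\<lambda>n. age_before Sg Dpi n t) k"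
  shows "\<forall>k\<in>{1..N}. kth_largest N (\<lambda>n. age Sg DP n t) k
                     \<le> kth_largest N (\<lambda>n. age Sg Dpi n t) k"
proof -
  obtain S A where SA: "Sg = (\<lambda>n. S)" "Ag = (\<lambda>n. A)"
    using sync unfolding synchronized_def by (metis ext)
  have fin: "finite {k. A k < t}"
    using fin_arr SA by (auto intro: finite_subset[of _ "{i. A i \<le> t}"])
  obtain n0 i0 where n0: "n0 < N" "DP n0 i0 = Some t" using delP by blast
  obtain m j where m: "m < N" "Dpi m j = Some t" using delpi by blast
  note validP = validP[unfolded SA] and validpi = validpi[unfolded SA]
    and P1 = P1[unfolded SA]
  let ?L = "freshest_arrived S A t"
  have "count_ge N (\<lambda>n. age (\<lambda>n. S) DP n t) x \<le> count_ge N (\<lambda>n. age (\<lambda>n. S) Dpi n t) x"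
    for x
  proof (rule count_ge_le_after_lowering_max[where p = n0 and q = m])
    show "\<forall>x. count_ge N (\<lambda>n. age_before (\<lambda>n. S) DP n t) x
              \<le> count_ge N (\<lambda>n. age_before (\<lambda>n. S) Dpi n t) x"
      using before unfolding SA kth_largest_le_iff_count_ge .
    show "\<forall>n<N. age_before (\<lambda>n. S) DP n t \<le> age_before (\<lambda>n. S) DP n0 t"
      using maf_lgfs_delivers_max_age[OF fin validP P1 n0 initP] by blast
    show "age (\<lambda>n. S) DP n0 t = t - ?L"
      by (rule maf_lgfs_age_after_delivery[OF fin validP P1 n0 initP])
    show "\<forall>n<N. n \<noteq> n0 \<longrightarrow> age (\<lambda>n. S) DP n t = age_before (\<lambda>n. S) DP n t"
      using age_eq_age_before_other_flow[OF validP _ n0] by blast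
    show "\<forall>n<N. t - ?L \<le> age_before (\<lambda>n. S) DP n t"
      using age_before_ge_freshest_arrived[OF fin validP] initP by blast
    show "\<forall>n<N. n \<noteq> m \<longrightarrow> age (\<lambda>n. S) Dpi n t = age_before (\<lambda>n. S) Dpi n t"
      using age_eq_age_before_other_flow[OF validpi _ m] by blast
    show "\<forall>n<N. t - ?L \<le> age (\<lambda>n. S) Dpi n t"
      using age_ge_freshest_arrived[OF fin validpi] initpi by blast
  qed (rule n0)
  then show ?thesis unfolding SA kth_largest_le_iff_count_ge by blast
qed
end
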